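(* Let $(X,\mathcal{B},\mu)$ be a standard $\sigma$-finite measure space and let $\xi$ be a probability measure on $(X^*,\mathcal{B}^* )$ whose barycenter is $\mu$. Let $\{A_n\}_{n=1}^{\infty}$ be a measurable partition of $X$ into sets with $\mu(A_n)<\infty$. Then $(X^*,\mathcal{B}^* )$ is isomorphic modulo $\xi$ to $$\Big(\prod_{n=1}^{\infty} C A_n^\dagger,\ \bigotimes_{n=1}^{\infty}\mathcal{B}(C A_n^\dagger)\Big),$$ where for a space $Z$, $CZ:=(Z\times\mathbb{R}_+)/(Z\times\{0\})$ denotes the cone of $Z$, $A_n^\dagger$ is the set of probability measures on $A_n$ equipped with the natural $\sigma$-algebra coming from $\mathcal{B}\cap A_n$, and $\mathcal{B}(CA_n^\dagger)$ is the induced $\sigma$-algebra on the cone.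
   Context: $X^*$ denotes the set of all measures on $(X,\mathcal{B})$, and $\mathcal{B}^*$ is the $\sigma$-algebra on $X^*$ generated by the sets $\{\gamma\in X^*:\gamma(B)\in[a,b]\}$ for $B\in\mathcal{B}$, $0\le a\le b\le\infty$. A probability $\xi$ on $(X^*,\mathcal{B}^* )$ has barycenter $\mu$ if for every $f\in L^1(X,\mathcal{B},\mu)$, $\int f\,d\mu=\int f^*(\gamma)\,d\xi(\gamma)$, where $f^*(\gamma)=\int f\,d\gamma$; in particular, if $\mu(A)=0$ then $\xi(\{\gamma:\gamma(A)>0\})=0$. "Isomorphic modulo $\xi$" means there is a $\mathcal{B}^*$-measurable map defined and injective on a set of full $\xi$-measure onto the product space with measurable inverse. *)

theory Defs
  imports "HOL-Probability.Probability"
begin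

definition borel_embedding :: "'a measure \<Rightarrow> ('a \<Rightarrow> 'p::polish_space) \<Rightarrow> bool" where
  "borel_embedding M \<phi> \<longleftrightarrow> (\<exists>S \<in> sets borel. bij_betw \<phi> (space M) S \<and>
      \<phi> \<in> M \<rightarrow>\<^sub>M restrict_space borel S \<and>
      the_inv_into (space M) \<phi> \<in> restrict_space borel S \<rightarrow>\<^sub>M M)"

definition measures_space :: "'a measure \<Rightarrow> 'a measure measure" where
  "measures_space M = sigma {\<gamma>. sets \<gamma> = sets M}
     {{\<gamma>. sets \<gamma> = sets M \<and> emeasure \<gamma> B \<in> {a..b}} | B a b. B \<in> sets M \<and> a \<le> b}"

definition has_barycenter :: "'a measure measure \<Rightarrow> 'a measure \<Rightarrow> bool" where
  "has_barycenter \<xi> M \<longleftrightarrow> (\<forall>f::'a \<Rightarrow> real. integrable M f \<longrightarrow>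
      (AE \<gamma> in \<xi>. integrable \<gamma> f) \<and> integrable \<xi> (\<lambda>\<gamma>. \<integral>x. f x \<partial>\<gamma>) \<and>
      (\<integral>x. f x \<partial>M) = (\<integral>\<gamma>. (\<integral>x. f x \<partial>\<gamma>) \<partial>\<xi>))"

text \<open>Cone CZ = (Z x R_+)/(Z x {0}); the apex is None, the class of (z,t), t>0, is Some (z,t).
  The sigma-algebra is the quotient (final) sigma-algebra of the product sigma-algebra.\<close>
definition cone_quot :: "'b \<times> real \<Rightarrow> ('b \<times> real) option" where
  "cone_quot = (\<lambda>(z,t). if t = 0 then None else Some (z,t))"

definition meas_cone :: "'b measure \<Rightarrow> ('b \<times> real) option measure" where
  "meas_cone Z = (let R = restrict_space borel {0::real..};
                 \<Omega> = {None} \<union> cone_quot ` (space Z \<times> {0::real..})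
             in measure_of \<Omega>
                  {U. U \<subseteq> \<Omega> \<and> cone_quot -` U \<inter> space (Z \<Otimes>\<^sub>M R) \<in> sets (Z \<Otimes>\<^sub>M R)} (\<lambda>_. 0))"

definition iso_mod :: "'x measure \<Rightarrow> 'y measure \<Rightarrow> bool" where
  "iso_mod \<xi> P \<longleftrightarrow> (\<exists>Y \<Phi> \<psi>. Y \<in> sets \<xi> \<and> emeasure \<xi> (space \<xi> - Y) = 0 \<and>
      \<Phi> \<in> restrict_space \<xi> Y \<rightarrow>\<^sub>M P \<and> inj_on \<Phi> Y \<and> \<Phi> ` Y = space P \<and>
      \<psi> \<in> P \<rightarrow>\<^sub>M restrict_space \<xi> Y \<and> (\<forall>y\<in>Y. \<psi> (\<Phi> y) = y))"

end

theory Submission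
  imports Defs
begin

text \<open>
  Let \<open>Y\<close> be the set of measures \<open>\<gamma>\<close> with \<open>\<gamma>(A\<^sub>n) < \<infinity>\<close> for all \<open>n\<close>. Applying the
  barycenter formula to the indicator of \<open>A\<^sub>n\<close> (which is \<open>\<mu>\<close>-integrable) shows that
  \<open>\<xi>\<close>-almost every \<open>\<gamma>\<close> lies in \<open>Y\<close>. On \<open>Y\<close>, the map sending \<open>\<gamma>\<close> to the family of points
  \<open>(\<gamma>(A\<^sub>n)\<^sup>-\<^sup>1 \<gamma>|\<^bsub>A\<^sub>n\<^esub>, \<gamma>(A\<^sub>n))\<close> of the cones \<open>C A\<^sub>n\<^sup>\<dagger>\<close> (the apex when \<open>\<gamma>(A\<^sub>n) = 0\<close>) is
  inverted by gluing, \<open>(p\<^sub>n, t\<^sub>n)\<^sub>n \<mapsto> \<Sum>\<^sub>n t\<^sub>n p\<^sub>n\<close>. Both maps are measurable since on either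
  side the \<open>\<sigma>\<close>-algebra is generated by the evaluations \<open>\<gamma> \<mapsto> \<gamma>(B)\<close>.
\<close>

lemma space_measures_space: "space (measures_space M) = {\<gamma>. sets \<gamma> = sets M}"
  unfolding measures_space_def by (rule space_measure_of) auto

lemma measurable_emeasure_measures_space:
  assumes "B \<in> sets M"
  shows "(\<lambda>\<gamma>. emeasure \<gamma> B) \<in> borel_measurable (measures_space M)"
proof (rule borel_measurableI_le)
  fix y :: ennreal
  have "{\<gamma> \<in> space (measures_space M). emeasure \<gamma> B \<le> y}
      = {\<gamma>. sets \<gamma> = sets M \<and> emeasure \<gamma> B \<in> {0..y}}"
    by (auto simp: space_measures_space)
  also have "\<dots> \<in> sets (measures_space M)"
    unfolding measures_space_def using assms
    by (subst sets_measure_of, blast)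
      (rule sigma_sets.Basic, intro CollectI exI[where x=B] exI[where x=0] exI[where x=y], simp)
  finally show "{\<gamma> \<in> space (measures_space M). emeasure \<gamma> B \<le> y} \<in> sets (measures_space M)" .
qed

lemma measurable_measures_spaceI:
  assumes "\<And>x. x \<in> space N \<Longrightarrow> sets (f x) = sets M"
    and "\<And>B. B \<in> sets M \<Longrightarrow> (\<lambda>x. emeasure (f x) B) \<in> borel_measurable N"
  shows "f \<in> N \<rightarrow>\<^sub>M measures_space M"
  unfolding measures_space_def
proof (rule measurable_measure_of)
  fix U assume "U \<in> {{\<gamma>. sets \<gamma> = sets M \<and> emeasure \<gamma> B \<in> {a..b}} | B a b. B \<in> sets M \<and> a \<le> b}"
  then obtain B a b where U: "U = {\<gamma>. sets \<gamma> = sets M \<and> emeasure \<gamma> B \<in> {a..b}}" and B: "B \<in> sets M"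
    by blast
  have "f -` U \<inter> space N = {x \<in> space N. a \<le> emeasure (f x) B \<and> emeasure (f x) B \<le> b}"
    using assms(1) by (auto simp: U)
  also have "\<dots> \<in> sets N"
    using assms(2)[OF B] by measurable
  finally show "f -` U \<inter> space N \<in> sets N" .
qed (use assms(1) in auto)

lemma space_meas_cone: "space (meas_cone Z) = {None} \<union> cone_quot ` (space Z \<times> {0..})"
  unfolding meas_cone_def Let_def by (rule space_measure_of) auto

lemma meas_cone_eq_measure_of:
  "meas_cone Z = measure_of (space (meas_cone Z))
     {U. U \<subseteq> space (meas_cone Z) \<and>
         cone_quot -` U \<inter> space (Z \<Otimes>\<^sub>M restrict_space borel {0..})
           \<in> sets (Z \<Otimes>\<^sub>M restrict_space borel {0..})} (\<lambda>_. 0)"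
  unfolding space_meas_cone by (simp add: meas_cone_def Let_def)

lemma in_space_meas_cone_iff:
  "c \<in> space (meas_cone Z) \<longleftrightarrow> c = None \<or> (\<exists>z t. c = Some (z, t) \<and> z \<in> space Z \<and> 0 < t)"
proof
  assume "c \<in> space (meas_cone Z)"
  then show "c = None \<or> (\<exists>z t. c = Some (z, t) \<and> z \<in> space Z \<and> 0 < t)"
    by (auto simp: space_meas_cone cone_quot_def split: if_splits)
next
  assume "c = None \<or> (\<exists>z t. c = Some (z, t) \<and> z \<in> space Z \<and> 0 < t)"
  then show "c \<in> space (meas_cone Z)"
  proof
    assume "\<exists>z t. c = Some (z, t) \<and> z \<in> space Z \<and> 0 < t"
    then obtain z t where "c = Some (z, t)" "z \<in> space Z" "0 < t"
      by blast
    then have "c = cone_quot (z, t)" "(z, t) \<in> space Z \<times> {0..}"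
      by (auto simp: cone_quot_def)
    then show ?thesis
      by (auto simp: space_meas_cone)
  qed (simp add: space_meas_cone)
qed

lemma in_sets_meas_coneI:
  assumes "U \<subseteq> space (meas_cone Z)"
    and "cone_quot -` U \<inter> space (Z \<Otimes>\<^sub>M restrict_space borel {0..})
      \<in> sets (Z \<Otimes>\<^sub>M restrict_space borel {0..})"
  shows "U \<in> sets (meas_cone Z)"
proof -
  have "U \<in> sets (measure_of (space (meas_cone Z))
     {U. U \<subseteq> space (meas_cone Z) \<and>
         cone_quot -` U \<inter> space (Z \<Otimes>\<^sub>M restrict_space borel {0..})
           \<in> sets (Z \<Otimes>\<^sub>M restrict_space borel {0..})} (\<lambda>_. 0))"
    using assms by (intro in_measure_of) auto
  then show ?thesis
    by (simp only: meas_cone_eq_measure_of[symmetric])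
qed

lemma cone_quot_in_space_meas_cone:
  "p \<in> space (Z \<Otimes>\<^sub>M restrict_space borel {0..}) \<Longrightarrow> cone_quot p \<in> space (meas_cone Z)"
  by (auto simp: space_meas_cone space_pair_measure)

lemma measurable_from_meas_cone:
  assumes "g \<circ> cone_quot \<in> Z \<Otimes>\<^sub>M restrict_space borel {0..} \<rightarrow>\<^sub>M N"
    and "g \<in> space (meas_cone Z) \<rightarrow> space N"
  shows "g \<in> meas_cone Z \<rightarrow>\<^sub>M N"
proof -
  let ?P = "Z \<Otimes>\<^sub>M restrict_space borel {0::real..}"
  have "g -` U \<inter> space (meas_cone Z) \<in> sets (meas_cone Z)" if U: "U \<in> sets N" for U
  proof -
    have "cone_quot -` (g -` U \<inter> space (meas_cone Z)) \<inter> space ?P = (g \<circ> cone_quot) -` U \<inter> space ?P"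
      using cone_quot_in_space_meas_cone[of _ Z] by auto
    also have "\<dots> \<in> sets ?P"
      using measurable_sets[OF assms(1) U] .
    finally show ?thesis
      by (intro in_sets_meas_coneI) auto
  qed
  then show ?thesis
    using assms(2) by (auto simp: measurable_def)
qed

lemma measurable_to_meas_cone:
  assumes S: "S \<in> sets N"
    and none: "\<And>x. x \<in> space N - S \<Longrightarrow> f x = None"
    and some: "\<And>x. x \<in> S \<Longrightarrow> f x = Some (h x) \<and> 0 < snd (h x)"
    and h: "h \<in> restrict_space N S \<rightarrow>\<^sub>M Z \<Otimes>\<^sub>M restrict_space borel {0..}"
  shows "f \<in> N \<rightarrow>\<^sub>M meas_cone Z"
proof (subst meas_cone_eq_measure_of, rule measurable_measure_of)
  let ?P = "Z \<Otimes>\<^sub>M restrict_space borel {0::real..}"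
  have S_space: "S \<subseteq> space N"
    using S sets.sets_into_space by blast
  have f_quot: "f x = cone_quot (h x)" and h_space: "h x \<in> space ?P" if "x \<in> S" for x
    using some[OF that] measurable_space[OF h, of x] that S_space
    by (auto simp: cone_quot_def space_restrict_space split: prod.splits)
  show "f \<in> space N \<rightarrow> space (meas_cone Z)"
  proof
    fix x assume "x \<in> space N"
    then show "f x \<in> space (meas_cone Z)"
      using none[of x] f_quot[of x] h_space[of x] cone_quot_in_space_meas_cone[of "h x" Z]
      by (cases "x \<in> S") (auto simp: space_meas_cone)
  qed
  fix U assume "U \<in> {U. U \<subseteq> space (meas_cone Z) \<and> cone_quot -` U \<inter> space ?P \<in> sets ?P}"
  then have "h -` (cone_quot -` U \<inter> space ?P) \<inter> space (restrict_space N S) \<in> sets (restrict_space N S)"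
    by (intro measurable_sets[OF h]) auto
  then have "h -` (cone_quot -` U \<inter> space ?P) \<inter> S \<in> sets N"
    using S S_space by (simp add: space_restrict_space sets_restrict_space_iff Int_absorb2)
  moreover have "f -` U \<inter> space N
      = (if None \<in> U then space N - S else {}) \<union> (h -` (cone_quot -` U \<inter> space ?P) \<inter> S)"
  proof (rule set_eqI)
    fix x
    show "x \<in> f -` U \<inter> space N \<longleftrightarrow>
        x \<in> (if None \<in> U then space N - S else {}) \<union> (h -` (cone_quot -` U \<inter> space ?P) \<inter> S)"
      using none[of x] f_quot[of x] h_space[of x] S_space by (cases "x \<in> S"; cases "None \<in> U") auto
  qed
  ultimately show "f -` U \<inter> space N \<in> sets N"
    using S by auto
qed blast

definition normalized_restriction :: "'a measure \<Rightarrow> 'a set \<Rightarrow> 'a measure" where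
  "normalized_restriction \<gamma> \<Omega> = scale_measure (1 / emeasure \<gamma> \<Omega>) (restrict_space \<gamma> \<Omega>)"

lemma sets_normalized_restriction:
  "sets (normalized_restriction \<gamma> \<Omega>) = sets (restrict_space \<gamma> \<Omega>)"
  by (simp add: normalized_restriction_def)

lemma emeasure_normalized_restriction:
  assumes "\<Omega> \<in> sets \<gamma>" "X \<subseteq> \<Omega>"
  shows "emeasure (normalized_restriction \<gamma> \<Omega>) X = emeasure \<gamma> X / emeasure \<gamma> \<Omega>"
  using assms
  by (simp add: normalized_restriction_def emeasure_restrict_space sets.Int_space_eq2 ennreal_divide_times)

lemma prob_space_normalized_restriction:
  assumes "\<Omega> \<in> sets \<gamma>" "emeasure \<gamma> \<Omega> \<noteq> 0" "emeasure \<gamma> \<Omega> < \<infinity>"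
  shows "prob_space (normalized_restriction \<gamma> \<Omega>)"
proof (rule prob_spaceI)
  have "space (normalized_restriction \<gamma> \<Omega>) = \<Omega>"
    using sets.sets_into_space[OF assms(1)]
    by (auto simp: normalized_restriction_def space_scale_measure space_restrict_space)
  then show "emeasure (normalized_restriction \<gamma> \<Omega>) (space (normalized_restriction \<gamma> \<Omega>)) = 1"
    using assms by (simp add: emeasure_normalized_restriction ennreal_divide_self)
qed

lemma measurable_normalized_restriction:
  assumes \<Omega>: "\<Omega> \<in> sets M"
  shows "(\<lambda>\<gamma>. normalized_restriction \<gamma> \<Omega>)
    \<in> restrict_space (measures_space M) {\<gamma>. sets \<gamma> = sets M \<and> emeasure \<gamma> \<Omega> \<noteq> 0 \<and> emeasure \<gamma> \<Omega> < \<infinity>}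
      \<rightarrow>\<^sub>M prob_algebra (restrict_space M \<Omega>)"
    (is "_ \<in> ?N \<rightarrow>\<^sub>M _")
proof (rule measurable_prob_algebraI)
  have \<gamma>: "sets \<gamma> = sets M" "emeasure \<gamma> \<Omega> \<noteq> 0" "emeasure \<gamma> \<Omega> < \<infinity>" if "\<gamma> \<in> space ?N" for \<gamma>
    using that by (auto simp: space_restrict_space space_measures_space)
  show "prob_space (normalized_restriction \<gamma> \<Omega>)" if "\<gamma> \<in> space ?N" for \<gamma>
    using \<gamma>[OF that] \<Omega> by (intro prob_space_normalized_restriction) auto
  then show "(\<lambda>\<gamma>. normalized_restriction \<gamma> \<Omega>) \<in> ?N \<rightarrow>\<^sub>M subprob_algebra (restrict_space M \<Omega>)"
  proof (intro measurable_subprob_algebra)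
    fix \<gamma> assume "\<gamma> \<in> space ?N"
    then show "sets (normalized_restriction \<gamma> \<Omega>) = sets (restrict_space M \<Omega>)"
      unfolding sets_normalized_restriction by (intro sets_restrict_space_cong \<gamma>)
  next
    fix X assume X: "X \<in> sets (restrict_space M \<Omega>)"
    then have "X \<in> sets M" "X \<subseteq> \<Omega>"
      using \<Omega> sets.sets_into_space by (auto simp: sets_restrict_space_iff)
    then have [measurable]: "(\<lambda>\<gamma>. emeasure \<gamma> X) \<in> borel_measurable (measures_space M)"
      "(\<lambda>\<gamma>. emeasure \<gamma> \<Omega>) \<in> borel_measurable (measures_space M)"
      using \<Omega> by (simp_all add: measurable_emeasure_measures_space)
    have "(\<lambda>\<gamma>. emeasure \<gamma> X / emeasure \<gamma> \<Omega>) \<in> borel_measurable ?N"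
      by (intro measurable_restrict_space1) measurable
    then show "(\<lambda>\<gamma>. emeasure (normalized_restriction \<gamma> \<Omega>) X) \<in> borel_measurable ?N"
    proof (rule measurable_cong[THEN iffD1, rotated])
      fix \<gamma> assume "\<gamma> \<in> space ?N"
      with \<gamma>(1) have "\<Omega> \<in> sets \<gamma>"
        using \<Omega> by blast
      then show "emeasure \<gamma> X / emeasure \<gamma> \<Omega> = emeasure (normalized_restriction \<gamma> \<Omega>) X"
        using \<open>X \<subseteq> \<Omega>\<close> by (simp add: emeasure_normalized_restriction)
    qed
  qed (rule prob_space_imp_subprob_space)
qed

lemma Some_in_space_meas_cone_prob_algebraD:
  assumes "Some (p, t) \<in> space (meas_cone (prob_algebra N))"
  shows "sets p = sets N" "prob_space p" "0 < t"
  using assms by (simp_all add: in_space_meas_cone_iff space_prob_algebra)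

definition cone_emeasure :: "('a measure \<times> real) option \<Rightarrow> 'a set \<Rightarrow> ennreal" where
  "cone_emeasure c X = (case c of None \<Rightarrow> 0 | Some (p, t) \<Rightarrow> emeasure p X * ennreal t)"

lemma cone_emeasure_empty [simp]: "cone_emeasure c {} = 0"
  by (simp add: cone_emeasure_def split: option.split)

lemma measurable_cone_emeasure:
  assumes "X \<in> sets N"
  shows "(\<lambda>c. cone_emeasure c X) \<in> borel_measurable (meas_cone (prob_algebra N))"
proof (rule measurable_from_meas_cone)
  let ?P = "prob_algebra N \<Otimes>\<^sub>M restrict_space borel {0::real..}"
  have [measurable]: "snd \<in> borel_measurable ?P"
    by (rule measurable_compose[OF measurable_snd measurable_restrict_space1]) simp
  have [measurable]: "(\<lambda>q. emeasure (fst q) X) \<in> borel_measurable ?P"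
    using assms unfolding prob_algebra_def
    by (intro measurable_compose[OF measurable_fst] measurable_restrict_space1
        measurable_emeasure_subprob_algebra)
  have "(\<lambda>q. if snd q = 0 then 0 else emeasure (fst q) X * ennreal (snd q)) \<in> borel_measurable ?P"
    by measurable
  then show "(\<lambda>c. cone_emeasure c X) \<circ> cone_quot \<in> borel_measurable ?P"
    by (rule measurable_cong[THEN iffD1, rotated]) (auto simp: cone_emeasure_def cone_quot_def)
qed simp

lemma cone_emeasure_space:
  assumes "c \<in> space (meas_cone (prob_algebra N))"
  shows "cone_emeasure c (space N) = (case c of None \<Rightarrow> 0 | Some (p, t) \<Rightarrow> ennreal t)"
proof (cases c)
  case (Some q)
  then obtain p t where c: "c = Some (p, t)"
    by (cases q) blast
  note p = Some_in_space_meas_cone_prob_algebraD[OF assms[unfolded c]]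
  then have "emeasure p (space N) = 1"
    using prob_space.emeasure_space_1 sets_eq_imp_space_eq by metis
  then show ?thesis
    by (simp add: c cone_emeasure_def)
qed (simp add: cone_emeasure_def)

lemma countably_additive_cone_emeasure:
  assumes "c \<in> space (meas_cone (prob_algebra N))"
  shows "countably_additive (sets N) (cone_emeasure c)"
proof (cases c)
  case None
  then show ?thesis by (simp add: cone_emeasure_def countably_additive_def)
next
  case (Some q)
  then obtain p t where c: "c = Some (p, t)"
    by (cases q) blast
  note p = Some_in_space_meas_cone_prob_algebraD[OF assms[unfolded c]]
  show ?thesis
  proof (rule countably_additiveI)
    fix F :: "nat \<Rightarrow> _" assume "range F \<subseteq> sets N" "disjoint_family F"
    then have "(\<Sum>i. emeasure p (F i)) = emeasure p (\<Union>i. F i)"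
      by (intro suminf_emeasure) (simp_all add: p)
    then show "(\<Sum>i. cone_emeasure c (F i)) = cone_emeasure c (\<Union>i. F i)"
      by (simp add: c cone_emeasure_def)
  qed
qed

lemma countably_additive_restrict:
  assumes \<Omega>: "\<Omega> \<in> sets M" and ca: "countably_additive (sets (restrict_space M \<Omega>)) \<mu>"
  shows "countably_additive (sets M) (\<lambda>B. \<mu> (B \<inter> \<Omega>))"
proof (rule countably_additiveI)
  fix F :: "nat \<Rightarrow> _" assume F: "range F \<subseteq> sets M" "disjoint_family F"
  have G: "range (\<lambda>i. F i \<inter> \<Omega>) \<subseteq> sets (restrict_space M \<Omega>)"
    using F(1) \<Omega> by (auto simp: sets_restrict_space_iff)
  moreover have "disjoint_family (\<lambda>i. F i \<inter> \<Omega>)"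
    using F(2) by (auto simp: disjoint_family_on_def)
  moreover have "(\<Union>i. F i \<inter> \<Omega>) \<in> sets (restrict_space M \<Omega>)"
    using G by (intro sets.countable_UN) auto
  ultimately have "(\<Sum>i. \<mu> (F i \<inter> \<Omega>)) = \<mu> (\<Union>i. F i \<inter> \<Omega>)"
    using ca by (simp add: countably_additive_def)
  moreover have "(\<Union>i. F i \<inter> \<Omega>) = (\<Union>i. F i) \<inter> \<Omega>"
    by blast
  ultimately show "(\<Sum>i. \<mu> (F i \<inter> \<Omega>)) = \<mu> ((\<Union>i. F i) \<inter> \<Omega>)"
    by simp
qed

lemma suminf_ennreal_commute:
  fixes h :: "nat \<Rightarrow> nat \<Rightarrow> ennreal"
  shows "(\<Sum>i. \<Sum>n. h i n) = (\<Sum>n. \<Sum>i. h i n)"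
proof -
  have "(\<Sum>i. \<Sum>n. h i n) = (\<integral>\<^sup>+i. (\<Sum>n. h i n) \<partial>count_space UNIV)"
    by (simp add: nn_integral_count_space_nat)
  also have "\<dots> = (\<Sum>n. \<integral>\<^sup>+i. h i n \<partial>count_space UNIV)"
    by (rule nn_integral_suminf) simp
  also have "\<dots> = (\<Sum>n. \<Sum>i. h i n)"
    by (simp add: nn_integral_count_space_nat)
  finally show ?thesis .
qed

lemma emeasure_measure_of_suminf:
  assumes ca: "\<And>n. countably_additive (sets M) (\<mu> n)" and empty: "\<And>n. \<mu> n {} = 0"
    and B: "B \<in> sets M"
  shows "emeasure (measure_of (space M) (sets M) (\<lambda>B. \<Sum>n. \<mu> n B)) B = (\<Sum>n. \<mu> n B)"
proof (rule emeasure_measure_of_sigma[OF sets.sigma_algebra_axioms _ _ B])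
  show "positive (sets M) (\<lambda>B. \<Sum>n. \<mu> n B)"
    using empty by (simp add: positive_def)
  show "countably_additive (sets M) (\<lambda>B. \<Sum>n. \<mu> n B)"
  proof (rule countably_additiveI)
    fix F :: "nat \<Rightarrow> _" assume F: "range F \<subseteq> sets M" "disjoint_family F" "(\<Union>i. F i) \<in> sets M"
    have "(\<Sum>i. \<Sum>n. \<mu> n (F i)) = (\<Sum>n. \<Sum>i. \<mu> n (F i))"
      by (rule suminf_ennreal_commute)
    also have "\<dots> = (\<Sum>n. \<mu> n (\<Union>i. F i))"
      using ca F by (simp add: countably_additive_def)
    finally show "(\<Sum>i. \<Sum>n. \<mu> n (F i)) = (\<Sum>n. \<mu> n (\<Union>i. F i))" .
  qed
qed

lemma iso_modI:
  assumes AE_Y: "AE y in \<xi>. y \<in> Y" and Y: "Y \<in> sets \<xi>"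
    and \<Phi>: "\<Phi> \<in> restrict_space \<xi> Y \<rightarrow>\<^sub>M P" and \<psi>: "\<psi> \<in> P \<rightarrow>\<^sub>M restrict_space \<xi> Y"
    and \<psi>_\<Phi>: "\<And>y. y \<in> Y \<Longrightarrow> \<psi> (\<Phi> y) = y"
    and \<Phi>_\<psi>: "\<And>x. x \<in> space P \<Longrightarrow> \<Phi> (\<psi> x) = x"
  shows "iso_mod \<xi> P"
  unfolding iso_mod_def
proof (intro exI conjI)
  have space_Y: "space (restrict_space \<xi> Y) = Y"
    using sets.sets_into_space[OF Y] by (simp add: space_restrict_space Int_absorb2)
  show "emeasure \<xi> (space \<xi> - Y) = 0"
    using AE_Y Y by (subst AE_iff_measurable[symmetric]) auto
  show "inj_on \<Phi> Y"
    using \<psi>_\<Phi> by (rule inj_on_inverseI)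
  show "\<Phi> ` Y = space P"
  proof
    show "\<Phi> ` Y \<subseteq> space P"
      using measurable_space[OF \<Phi>] space_Y by auto
    show "space P \<subseteq> \<Phi> ` Y"
      using measurable_space[OF \<psi>] space_Y \<Phi>_\<psi> by (metis image_eqI subsetI)
  qed
  show "\<forall>y\<in>Y. \<psi> (\<Phi> y) = y"
    using \<psi>_\<Phi> by blast
qed fact+

lemma sets_eq_if_in_space_measures_space:
  assumes "sets \<xi> = sets (measures_space M)" "\<gamma> \<in> space \<xi>"
  shows "sets \<gamma> = sets M"
  using assms(2) unfolding sets_eq_imp_space_eq[OF assms(1)] by (simp add: space_measures_space)

lemma AE_finite_emeasure_of_barycenter:
  assumes bary: "has_barycenter \<xi> M" and sets_\<xi>: "sets \<xi> = sets (measures_space M)"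
    and B: "B \<in> sets M" and fin: "emeasure M B < \<infinity>"
  shows "AE \<gamma> in \<xi>. emeasure \<gamma> B < \<infinity>"
proof -
  have B_space: "B \<inter> space N = B" if "sets N = sets M" for N :: "'a measure"
    using sets.sets_into_space[OF B] sets_eq_imp_space_eq[OF that] by auto
  have "integrable M (indicator B :: 'a \<Rightarrow> real)"
    using B fin by (simp add: integrable_indicator_iff B_space)
  then have "AE \<gamma> in \<xi>. integrable \<gamma> (indicator B :: 'a \<Rightarrow> real)"
    using bary by (simp add: has_barycenter_def)
  moreover have "AE \<gamma> in \<xi>. sets \<gamma> = sets M"
    by (rule AE_I2) (rule sets_eq_if_in_space_measures_space[OF sets_\<xi>])
  ultimately show ?thesis
    by eventually_elim (simp add: integrable_indicator_iff B_space)
qed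

locale countable_measurable_partition =
  fixes M :: "'a measure" and A :: "nat \<Rightarrow> 'a set"
  assumes sets_part: "\<And>n. A n \<in> sets M"
    and disjoint_part: "disjoint_family A"
    and Union_part: "(\<Union>n. A n) = space M"
begin

abbreviation cone_product :: "(nat \<Rightarrow> ('a measure \<times> real) option) measure" where
  "cone_product \<equiv> \<Pi>\<^sub>M n\<in>UNIV. meas_cone (prob_algebra (restrict_space M (A n)))"

definition piecewise_finite :: "'a measure set" where
  "piecewise_finite = {\<gamma>. sets \<gamma> = sets M \<and> (\<forall>n. emeasure \<gamma> (A n) < \<infinity>)}"

definition cone_coords :: "'a measure \<Rightarrow> nat \<Rightarrow> ('a measure \<times> real) option" where
  "cone_coords \<gamma> n = (if emeasure \<gamma> (A n) = 0 then None
     else Some (normalized_restriction \<gamma> (A n), enn2real (emeasure \<gamma> (A n))))"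

definition glue :: "(nat \<Rightarrow> ('a measure \<times> real) option) \<Rightarrow> 'a measure" where
  "glue x = measure_of (space M) (sets M) (\<lambda>B. \<Sum>n. cone_emeasure (x n) (B \<inter> A n))"

lemma part_subset_space: "A n \<subseteq> space M"
  using sets.sets_into_space[OF sets_part] .

lemma space_restrict_part: "space (restrict_space M (A n)) = A n"
  using part_subset_space by (simp add: space_restrict_space Int_absorb2)

lemma piecewise_finite_in_sets: "piecewise_finite \<in> sets (measures_space M)"
proof -
  have [measurable]: "(\<lambda>\<gamma>. emeasure \<gamma> (A n)) \<in> borel_measurable (measures_space M)" for n
    by (rule measurable_emeasure_measures_space[OF sets_part])
  have "piecewise_finite = {\<gamma> \<in> space (measures_space M). \<forall>n. emeasure \<gamma> (A n) < \<infinity>}"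
    by (auto simp: piecewise_finite_def space_measures_space)
  also have "\<dots> \<in> sets (measures_space M)"
    by measurable
  finally show ?thesis .
qed

lemma space_restrict_piecewise_finite:
  "space (restrict_space (measures_space M) piecewise_finite) = piecewise_finite"
  by (auto simp: space_restrict_space space_measures_space piecewise_finite_def)

lemma measurable_cone_coord:
  "(\<lambda>\<gamma>. cone_coords \<gamma> n) \<in> restrict_space (measures_space M) piecewise_finite
     \<rightarrow>\<^sub>M meas_cone (prob_algebra (restrict_space M (A n)))"
proof (rule measurable_to_meas_cone)
  let ?S = "{\<gamma> \<in> piecewise_finite. emeasure \<gamma> (A n) \<noteq> 0}"
  let ?h = "\<lambda>\<gamma>. (normalized_restriction \<gamma> (A n), enn2real (emeasure \<gamma> (A n)))"
  have [measurable]: "(\<lambda>\<gamma>. emeasure \<gamma> (A n)) \<in> borel_measurable (measures_space M)"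
    by (rule measurable_emeasure_measures_space[OF sets_part])
  have "?S = piecewise_finite \<inter> {\<gamma> \<in> space (measures_space M). emeasure \<gamma> (A n) \<noteq> 0}"
    by (auto simp: piecewise_finite_def space_measures_space)
  also have "\<dots> \<in> sets (restrict_space (measures_space M) piecewise_finite)"
    using piecewise_finite_in_sets by (subst sets_restrict_space_iff) auto
  finally show S: "?S \<in> sets (restrict_space (measures_space M) piecewise_finite)" .
  show "cone_coords \<gamma> n = None"
    if "\<gamma> \<in> space (restrict_space (measures_space M) piecewise_finite) - ?S" for \<gamma>
    using that by (simp add: space_restrict_piecewise_finite cone_coords_def)
  show "cone_coords \<gamma> n = Some (?h \<gamma>) \<and> 0 < snd (?h \<gamma>)" if "\<gamma> \<in> ?S" for \<gamma>
    using that by (auto simp: cone_coords_def piecewise_finite_def enn2real_positive_iff intro: gr_zeroI)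
  have "restrict_space (restrict_space (measures_space M) piecewise_finite) ?S
      = restrict_space (measures_space M) ?S"
    using piecewise_finite_in_sets S by (subst restrict_restrict_space)
      (auto simp: sets_restrict_space_iff space_restrict_piecewise_finite intro!: arg_cong2[where f=restrict_space])
  moreover have "?h \<in> restrict_space (measures_space M) ?S
      \<rightarrow>\<^sub>M prob_algebra (restrict_space M (A n)) \<Otimes>\<^sub>M restrict_space borel {0..}"
  proof (rule measurable_Pair)
    show "(\<lambda>\<gamma>. normalized_restriction \<gamma> (A n)) \<in> restrict_space (measures_space M) ?S
        \<rightarrow>\<^sub>M prob_algebra (restrict_space M (A n))"
      by (rule measurable_restrict_mono[OF measurable_normalized_restriction[OF sets_part]])
        (auto simp: piecewise_finite_def)
    show "(\<lambda>\<gamma>. enn2real (emeasure \<gamma> (A n))) \<in> restrict_space (measures_space M) ?S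
        \<rightarrow>\<^sub>M restrict_space borel {0..}"
      by (intro measurable_restrict_space2 measurable_restrict_space1) auto
  qed
  ultimately show "?h \<in> restrict_space (restrict_space (measures_space M) piecewise_finite) ?S
      \<rightarrow>\<^sub>M prob_algebra (restrict_space M (A n)) \<Otimes>\<^sub>M restrict_space borel {0..}"
    by simp
qed

lemma measurable_cone_coords:
  "cone_coords \<in> restrict_space (measures_space M) piecewise_finite \<rightarrow>\<^sub>M cone_product"
proof -
  have "(\<lambda>\<gamma> n. cone_coords \<gamma> n) \<in> restrict_space (measures_space M) piecewise_finite \<rightarrow>\<^sub>M cone_product"
    by (rule measurable_PiM_single')
      (use measurable_cone_coord measurable_space[OF measurable_cone_coord] in auto)
  then show ?thesis
    by simp
qed

lemma cone_coord_in_space: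
  "x \<in> space cone_product \<Longrightarrow> x n \<in> space (meas_cone (prob_algebra (restrict_space M (A n))))"
  unfolding space_PiM by (erule PiE_mem) simp

lemma sets_glue [simp]: "sets (glue x) = sets M"
  unfolding glue_def by (rule sets.sets_measure_of_eq)

lemma emeasure_glue:
  assumes "x \<in> space cone_product" "B \<in> sets M"
  shows "emeasure (glue x) B = (\<Sum>n. cone_emeasure (x n) (B \<inter> A n))"
proof -
  have "countably_additive (sets M) (\<lambda>B. cone_emeasure (x n) (B \<inter> A n))" for n
    using countably_additive_cone_emeasure[OF cone_coord_in_space[OF assms(1)]]
    by (rule countably_additive_restrict[OF sets_part])
  then show ?thesis
    unfolding glue_def by (rule emeasure_measure_of_suminf) (simp_all add: assms(2))
qed

lemma emeasure_glue_subset_part: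
  assumes "x \<in> space cone_product" "X \<in> sets M" "X \<subseteq> A n"
  shows "emeasure (glue x) X = cone_emeasure (x n) X"
proof -
  have "X \<inter> A m = {}" if "m \<noteq> n" for m
    using assms(3) disjoint_part that by (auto simp: disjoint_family_on_def)
  then have "(\<Sum>m. cone_emeasure (x m) (X \<inter> A m)) = (\<Sum>m\<in>{n}. cone_emeasure (x m) (X \<inter> A m))"
    by (intro suminf_finite) auto
  then show ?thesis
    using assms by (simp add: emeasure_glue Int_absorb2)
qed

lemma emeasure_glue_part:
  assumes "x \<in> space cone_product"
  shows "emeasure (glue x) (A n) = (case x n of None \<Rightarrow> 0 | Some (p, t) \<Rightarrow> ennreal t)"
proof -
  have "emeasure (glue x) (A n) = cone_emeasure (x n) (space (restrict_space M (A n)))"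
    unfolding space_restrict_part by (rule emeasure_glue_subset_part[OF assms sets_part order_refl])
  also have "\<dots> = (case x n of None \<Rightarrow> 0 | Some (p, t) \<Rightarrow> ennreal t)"
    by (rule cone_emeasure_space[OF cone_coord_in_space[OF assms]])
  finally show ?thesis .
qed

lemma glue_in_piecewise_finite:
  assumes "x \<in> space cone_product"
  shows "glue x \<in> piecewise_finite"
proof -
  have "emeasure (glue x) (A n) < \<infinity>" for n
    by (cases "x n") (auto simp: emeasure_glue_part[OF assms])
  then show ?thesis
    by (simp add: piecewise_finite_def)
qed

lemma measurable_glue:
  "glue \<in> cone_product \<rightarrow>\<^sub>M restrict_space (measures_space M) piecewise_finite"
proof (rule measurable_restrict_space2)
  show "glue \<in> space cone_product \<rightarrow> piecewise_finite"
    using glue_in_piecewise_finite by blast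
  show "glue \<in> cone_product \<rightarrow>\<^sub>M measures_space M"
  proof (rule measurable_measures_spaceI)
    fix B assume B: "B \<in> sets M"
    have "(\<lambda>x. x n) \<in> cone_product \<rightarrow>\<^sub>M meas_cone (prob_algebra (restrict_space M (A n)))" for n
      by (rule measurable_component_singleton) simp
    moreover have "(\<lambda>c. cone_emeasure c (B \<inter> A n))
        \<in> borel_measurable (meas_cone (prob_algebra (restrict_space M (A n))))" for n
      using B sets_part by (intro measurable_cone_emeasure) (simp add: sets_restrict_space_iff)
    ultimately have "(\<lambda>x. cone_emeasure (x n) (B \<inter> A n)) \<in> borel_measurable cone_product" for n
      by (rule measurable_compose)
    then have "(\<lambda>x. \<Sum>n. cone_emeasure (x n) (B \<inter> A n)) \<in> borel_measurable cone_product"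
      by (rule borel_measurable_suminf_order)
    then show "(\<lambda>x. emeasure (glue x) B) \<in> borel_measurable cone_product"
    proof (rule measurable_cong[THEN iffD1, rotated])
      fix x assume "x \<in> space cone_product"
      then show "(\<Sum>n. cone_emeasure (x n) (B \<inter> A n)) = emeasure (glue x) B"
        using B by (rule emeasure_glue[symmetric])
    qed
  qed simp
qed

lemma cone_coords_in_space:
  "\<gamma> \<in> piecewise_finite \<Longrightarrow> cone_coords \<gamma> \<in> space cone_product"
  using measurable_space[OF measurable_cone_coords, of \<gamma>] by (simp add: space_restrict_piecewise_finite)

lemma cone_emeasure_cone_coords:
  assumes \<gamma>: "\<gamma> \<in> piecewise_finite" and B: "B \<in> sets M"
  shows "cone_emeasure (cone_coords \<gamma> n) (B \<inter> A n) = emeasure \<gamma> (B \<inter> A n)"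
proof -
  have An: "A n \<in> sets \<gamma>" and fin: "emeasure \<gamma> (A n) < \<infinity>"
    using \<gamma> sets_part by (auto simp: piecewise_finite_def)
  show ?thesis
  proof (cases "emeasure \<gamma> (A n) = 0")
    case True
    have "emeasure \<gamma> (B \<inter> A n) \<le> emeasure \<gamma> (A n)"
      using An by (intro emeasure_mono) auto
    with True show ?thesis
      by (simp add: cone_coords_def cone_emeasure_def)
  next
    case False
    have "ennreal (enn2real (emeasure \<gamma> (A n))) = emeasure \<gamma> (A n)"
      using fin by (simp add: ennreal_enn2real)
    then show ?thesis
      using False fin An
      by (simp add: cone_coords_def cone_emeasure_def emeasure_normalized_restriction
          ennreal_divide_times)
  qed
qed

lemma glue_cone_coords:
  assumes \<gamma>: "\<gamma> \<in> piecewise_finite"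
  shows "glue (cone_coords \<gamma>) = \<gamma>"
proof (rule measure_eqI)
  have sets_\<gamma>: "sets \<gamma> = sets M"
    using \<gamma> by (simp add: piecewise_finite_def)
  then show "sets (glue (cone_coords \<gamma>)) = sets \<gamma>"
    by simp
  fix B assume "B \<in> sets (glue (cone_coords \<gamma>))"
  then have B: "B \<in> sets M"
    by simp
  have "emeasure (glue (cone_coords \<gamma>)) B = (\<Sum>n. emeasure \<gamma> (B \<inter> A n))"
    unfolding emeasure_glue[OF cone_coords_in_space[OF \<gamma>] B] cone_emeasure_cone_coords[OF \<gamma> B] ..
  also have "\<dots> = emeasure \<gamma> (\<Union>n. B \<inter> A n)"
  proof (rule suminf_emeasure)
    show "range (\<lambda>n. B \<inter> A n) \<subseteq> sets \<gamma>"
      using B sets_part sets_\<gamma> by auto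
    show "disjoint_family (\<lambda>n. B \<inter> A n)"
      using disjoint_part unfolding disjoint_family_on_def by blast
  qed
  also have "(\<Union>n. B \<inter> A n) = B"
    using Union_part sets.sets_into_space[OF B] by auto
  finally show "emeasure (glue (cone_coords \<gamma>)) B = emeasure \<gamma> B" .
qed

lemma cone_coords_glue:
  assumes x: "x \<in> space cone_product"
  shows "cone_coords (glue x) = x"
proof
  fix n
  show "cone_coords (glue x) n = x n"
  proof (cases "x n")
    case None
    then show ?thesis
      using emeasure_glue_part[OF x, of n] by (simp add: cone_coords_def)
  next
    case (Some q)
    then obtain p t where xn: "x n = Some (p, t)"
      by (cases q) blast
    note p = Some_in_space_meas_cone_prob_algebraD[OF cone_coord_in_space[OF x, of n, unfolded xn]]
    have mass: "emeasure (glue x) (A n) = ennreal t"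
      using emeasure_glue_part[OF x, of n] xn by simp
    have "normalized_restriction (glue x) (A n) = p"
    proof (rule measure_eqI)
      have "sets (normalized_restriction (glue x) (A n)) = sets (restrict_space M (A n))"
        unfolding sets_normalized_restriction by (rule sets_restrict_space_cong) simp
      then show sets_eq: "sets (normalized_restriction (glue x) (A n)) = sets p"
        using p(1) by simp
      fix X assume "X \<in> sets (normalized_restriction (glue x) (A n))"
      then have X: "X \<in> sets M" "X \<subseteq> A n"
        using sets_eq p(1) sets_part by (auto simp: sets_restrict_space_iff)
      have "emeasure (normalized_restriction (glue x) (A n)) X = emeasure (glue x) X / ennreal t"
        using X sets_part mass by (simp add: emeasure_normalized_restriction)
      also have "emeasure (glue x) X = emeasure p X * ennreal t"
        using emeasure_glue_subset_part[OF x X] xn by (simp add: cone_emeasure_def)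
      finally show "emeasure (normalized_restriction (glue x) (A n)) X = emeasure p X"
        using p(3) by (simp add: ennreal_mult_divide_eq)
    qed
    with mass p(3) show ?thesis
      by (simp add: cone_coords_def xn)
  qed
qed

lemma AE_piecewise_finite_of_barycenter:
  assumes bary: "has_barycenter \<xi> M" and sets_\<xi>: "sets \<xi> = sets (measures_space M)"
    and fin: "\<And>n. emeasure M (A n) < \<infinity>"
  shows "AE \<gamma> in \<xi>. \<gamma> \<in> piecewise_finite"
proof -
  have "AE \<gamma> in \<xi>. \<forall>n. emeasure \<gamma> (A n) < \<infinity>"
    unfolding AE_all_countable using AE_finite_emeasure_of_barycenter[OF bary sets_\<xi> sets_part fin] ..
  then show ?thesis
  proof (rule AE_mp[OF _ AE_I2[OF impI]])
    fix \<gamma> assume "\<gamma> \<in> space \<xi>" "\<forall>n. emeasure \<gamma> (A n) < \<infinity>"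
    then show "\<gamma> \<in> piecewise_finite"
      using sets_eq_if_in_space_measures_space[OF sets_\<xi>] by (simp add: piecewise_finite_def)
  qed
qed

theorem iso_mod_cone_product:
  assumes sets_\<xi>: "sets \<xi> = sets (measures_space M)" and AE: "AE \<gamma> in \<xi>. \<gamma> \<in> piecewise_finite"
  shows "iso_mod \<xi> cone_product"
proof -
  have sets_eq: "sets (restrict_space \<xi> piecewise_finite)
      = sets (restrict_space (measures_space M) piecewise_finite)"
    using sets_\<xi> by (rule sets_restrict_space_cong)
  from AE show ?thesis
  proof (rule iso_modI[where \<Phi>=cone_coords and \<psi>=glue])
    show "piecewise_finite \<in> sets \<xi>"
      using piecewise_finite_in_sets by (simp only: sets_\<xi>)
    show "cone_coords \<in> restrict_space \<xi> piecewise_finite \<rightarrow>\<^sub>M cone_product"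
      using measurable_cone_coords unfolding measurable_cong_sets[OF sets_eq refl] .
    show "glue \<in> cone_product \<rightarrow>\<^sub>M restrict_space \<xi> piecewise_finite"
      using measurable_glue unfolding measurable_cong_sets[OF refl sets_eq] .
  qed (fact glue_cone_coords cone_coords_glue)+
qed

end

theorem lemma2p1:
  fixes M :: "'a measure" and \<xi> :: "'a measure measure" and A :: "nat \<Rightarrow> 'a set"
  assumes standard: "\<exists>\<phi> :: 'a \<Rightarrow> 'p::polish_space. borel_embedding M \<phi>"
    and sfin: "sigma_finite_measure M"
    and xi_sets: "sets \<xi> = sets (measures_space M)"
    and xi_prob: "prob_space \<xi>"
    and bary: "has_barycenter \<xi> M"
    and A_meas: "\<And>n. A n \<in> sets M"
    and A_disj: "disjoint_family A"
    and A_cover: "(\<Union>n. A n) = space M"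
    and A_fin: "\<And>n. emeasure M (A n) < \<infinity>"
  shows "iso_mod \<xi> (\<Pi>\<^sub>M n\<in>UNIV. meas_cone (prob_algebra (restrict_space M (A n))))"
proof -
  interpret countable_measurable_partition M A
    using A_meas A_disj A_cover by unfold_locales
  show ?thesis
    using xi_sets AE_piecewise_finite_of_barycenter[OF bary xi_sets A_fin]
    by (rule iso_mod_cone_product)
qed

end
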